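(* Let $f\ge 1$ and $k\ge 2$ be integers and let there be $n=kf+1$ validators, each maintaining a local DAG as described in the context (DAG-Rider setting). Let $p_i$ be a correct validator, let $w$ be a wave, and let $v\in DAG_i[\mathit{round}(w,1)]$ be the leader vertex of wave $w$. Suppose $p_i$ commits $v$, i.e. at least $(k-1)f+1$ vertices of $DAG_i[\mathit{round}(w,4)]$ have a path to $v$. Then for every validator $p_j$, every wave $w'>w$, and every leader vertex $v'$ of wave $w'$ with $v'\in DAG_j[\mathit{round}(w',1)]$ (the leader of wave $w'$ is the $\mathit{round}(w',1)$ vertex of an arbitrary validator, selected by a shared coin), there is a path from $v'$ to $v$.
   Context: Setting: $n=kf+1$ validators $p_1,\dots,p_n$, of which at most $f$ are Byzantine and the rest are correct (honest). All validators' local DAGs are subsets of one common set of vertices. Each vertex has a round number $r\ge 1$ and a source validator; for each validator and each round there is at most one vertex (no equivocation), so any two local DAGs that contain the vertex of a given validator for a given round contain the identical vertex, with identical edges. Every vertex of round $r\ge 2$ has edges to exactly $(k-1)f+1$ vertices of round $r-1$, all with distinct sources. Each validator $p_i$ has a local DAG $DAG_i$, a set of vertices closed under edges (if $u\in DAG_i$ then every vertex $u$ has an edge to is in $DAG_i$). $DAG_i[r]$ denotes the set of round-$r$ vertices of $DAG_i$. $\mathit{path}(u,v)$ ("a path from $u$ to $v$") means there is a sequence of contiguous edges leading from $u$ to $v$. Rounds are grouped into waves of 4 rounds: $\mathit{round}(w,j)=4(w-1)+j$ for $j=1,2,3,4$ and waves $w\ge 1$. *)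

theory Defs
  imports Main
begin

text \<open>Round number of the j-th round of wave w (waves start at 1, j in 1..4).\<close>
definition wave_round :: "nat \<Rightarrow> nat \<Rightarrow> nat" where
  "wave_round w j = 4 * (w - 1) + j"

definition dag_path :: "('v \<Rightarrow> 'v \<Rightarrow> bool) \<Rightarrow> 'v \<Rightarrow> 'v \<Rightarrow> bool" where
  "dag_path E u v = E\<^sup>+\<^sup>+ u v"

text \<open>Validators are 1..n with n = k*f+1. V is the common
  set of vertices, rnd/src give round and source, E u x means u has an edge to x.\<close>
definition dag_setting ::
  "nat \<Rightarrow> nat \<Rightarrow> nat \<Rightarrow> 'v set \<Rightarrow> ('v \<Rightarrow> nat) \<Rightarrow> ('v \<Rightarrow> nat) \<Rightarrow> ('v \<Rightarrow> 'v \<Rightarrow> bool)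
    \<Rightarrow> (nat \<Rightarrow> 'v set) \<Rightarrow> nat set \<Rightarrow> bool" where
  "dag_setting f k n V rnd src E DAG Correct \<longleftrightarrow>
     n = k * f + 1 \<and>
     Correct \<subseteq> {1..n} \<and> card ({1..n} - Correct) \<le> f \<and>
     (\<forall>u\<in>V. rnd u \<ge> 1 \<and> src u \<in> {1..n}) \<and>
     (\<forall>u\<in>V. \<forall>u'\<in>V. rnd u = rnd u' \<and> src u = src u' \<longrightarrow> u = u') \<and>
     (\<forall>u x. E u x \<longrightarrow> u \<in> V \<and> x \<in> V \<and> rnd u \<ge> 2 \<and> rnd x = rnd u - 1) \<and>
     (\<forall>u\<in>V. rnd u \<ge> 2 \<longrightarrow>
        finite {x. E u x} \<and> card {x. E u x} = (k - 1) * f + 1 \<and> inj_on src {x. E u x}) \<and>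
     (\<forall>i\<in>{1..n}. DAG i \<subseteq> V \<and> (\<forall>u\<in>DAG i. \<forall>x. E u x \<longrightarrow> x \<in> DAG i))"

end

theory Submission
  imports Defs
begin

text \<open>Two quorums of \<open>(k - 1) * f + 1\<close> vertices of the same round exceed
  the \<open>n = k * f + 1\<close> possible sources, so they share a source and hence, by the absence
  of equivocation, a vertex. Thus every vertex of round \<open>round(w,4) + 1\<close> has an edge into
  the quorum of round-\<open>round(w,4)\<close> vertices that made \<open>p\<^sub>i\<close> commit \<open>v\<close>. Since every vertex
  has edges to the previous round, every later vertex, in particular every later leader,
  descends to such a vertex and therefore reaches \<open>v\<close>. Neither the correctness of \<open>p\<^sub>i\<close>
  nor the choice of leaders plays a role.\<close>

lemma Int_nonempty_if_card_add_gt: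
  assumes "finite U" "A \<subseteq> U" "B \<subseteq> U" "card U < card A + card B"
  shows "A \<inter> B \<noteq> {}"
proof
  assume "A \<inter> B = {}"
  then have "card A + card B = card (A \<union> B)"
    using assms(1-3) by (simp add: card_Un_disjoint finite_subset)
  also have "\<dots> \<le> card U"
    using assms(1-3) by (simp add: card_mono)
  finally show False
    using assms(4) by simp
qed

locale dag_rider =
  fixes f k n :: nat and V :: "'v set" and rnd src :: "'v \<Rightarrow> nat"
    and E :: "'v \<Rightarrow> 'v \<Rightarrow> bool" and DAG :: "nat \<Rightarrow> 'v set" and Correct :: "nat set"
  assumes setting: "dag_setting f k n V rnd src E DAG Correct"
begin

abbreviation quorum :: nat where
  "quorum \<equiv> (k - 1) * f + 1"

lemma n_eq: "n = k * f + 1"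
  using setting unfolding dag_setting_def by blast

lemma vertex_round_pos: "u \<in> V \<Longrightarrow> 1 \<le> rnd u"
  using setting unfolding dag_setting_def by blast

lemma vertex_src: "u \<in> V \<Longrightarrow> src u \<in> {1..n}"
  using setting unfolding dag_setting_def by blast

lemma edgeD: "E u x \<Longrightarrow> u \<in> V \<and> x \<in> V \<and> 2 \<le> rnd u \<and> rnd x = rnd u - 1"
  using setting unfolding dag_setting_def by blast

lemma out_edges:
  assumes "u \<in> V" "2 \<le> rnd u"
  shows "finite {x. E u x}" "card {x. E u x} = quorum" "inj_on src {x. E u x}"
  using setting assms unfolding dag_setting_def by blast+

lemma correct_subset: "Correct \<subseteq> {1..n}"
  using setting unfolding dag_setting_def by blast

lemma local_dag_subset: "i \<in> {1..n} \<Longrightarrow> DAG i \<subseteq> V"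
  using setting unfolding dag_setting_def by blast

lemma inj_on_src_round: "inj_on src {u \<in> V. rnd u = r}"
  using setting by (auto simp: dag_setting_def intro: inj_onI)

lemma ex_edge:
  assumes "u \<in> V" "2 \<le> rnd u"
  obtains x where "E u x"
proof -
  have "0 < card {x. E u x}"
    using out_edges(2)[OF assms] by simp
  then show thesis
    using that by (auto simp: card_gt_0_iff)
qed

lemma reaches_lower_round:
  assumes "u \<in> V" "1 \<le> r" "r \<le> rnd u"
  shows "\<exists>x \<in> V. rnd x = r \<and> E\<^sup>*\<^sup>* u x"
  using assms
proof (induction "rnd u - r" arbitrary: u)
  case 0
  then show ?case by auto
next
  case (Suc d)
  have "2 \<le> rnd u"
    using Suc.hyps(2) Suc.prems(2) by linarith
  then obtain x where x: "E u x"
    using ex_edge Suc.prems(1) by blast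
  have "x \<in> V" "rnd x = rnd u - 1"
    using edgeD[OF x] by auto
  then have "\<exists>y \<in> V. rnd y = r \<and> E\<^sup>*\<^sup>* x y"
    using Suc.hyps Suc.prems(2) by simp
  then show ?case
    using x by (meson converse_rtranclp_into_rtranclp)
qed

lemma n_less_two_quorums: "2 \<le> k \<Longrightarrow> n < 2 * quorum"
proof -
  assume "2 \<le> k"
  then obtain m where "k = Suc (Suc m)"
    using le_Suc_ex by (metis add_2_eq_Suc)
  then show ?thesis
    using n_eq by simp
qed

lemma edge_into_quorum:
  assumes "2 \<le> k" and S: "S \<subseteq> V" "\<forall>s \<in> S. rnd s = r" "quorum \<le> card S"
    and u: "u \<in> V" "rnd u = Suc r"
  shows "\<exists>s \<in> S. E u s"
proof -
  let ?N = "{x. E u x}"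
  obtain s0 where "s0 \<in> S"
    using S(3) by fastforce
  then have "2 \<le> rnd u"
    using S u vertex_round_pos by fastforce
  note N = out_edges[OF u(1) this]
  have S_round: "S \<subseteq> {s \<in> V. rnd s = r}"
    using S by blast
  have "card (src ` S) = card S"
    using card_image inj_on_subset[OF inj_on_src_round S_round] by blast
  moreover have "card (src ` ?N) = card ?N"
    using card_image N(3) by blast
  moreover have "src ` S \<subseteq> {1..n}" "src ` ?N \<subseteq> {1..n}"
    using S(1) vertex_src edgeD by blast+
  moreover have "card {1..n} < card S + card ?N"
    using n_less_two_quorums[OF \<open>2 \<le> k\<close>] S(3) N(2) by simp
  ultimately have "src ` S \<inter> src ` ?N \<noteq> {}"
    using Int_nonempty_if_card_add_gt[of "{1..n}"] by simp
  then obtain s x where s: "s \<in> S" and x: "E u x" and same_src: "src s = src x"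
    by auto
  have "x \<in> {y \<in> V. rnd y = r}"
    using edgeD[OF x] u(2) by simp
  moreover have "s \<in> {y \<in> V. rnd y = r}"
    using S_round s by blast
  ultimately have "s = x"
    using inj_onD[OF inj_on_src_round same_src] by blast
  then show ?thesis
    using s x by blast
qed

lemma quorum_reached_from_later_rounds:
  assumes "2 \<le> k" "S \<subseteq> V" "\<forall>s \<in> S. rnd s = r" "quorum \<le> card S"
    and paths: "\<forall>s \<in> S. dag_path E s v"
    and "u \<in> V" "r < rnd u"
  shows "dag_path E u v"
proof -
  obtain x where x: "x \<in> V" "rnd x = Suc r" "E\<^sup>*\<^sup>* u x"
    using reaches_lower_round[of u "Suc r"] assms(6,7) by auto
  obtain s where "s \<in> S" "E x s"
    using edge_into_quorum[OF assms(1-4) x(1,2)] by blast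
  then have "E\<^sup>+\<^sup>+ x v"
    using paths unfolding dag_path_def by (meson tranclp_into_tranclp2)
  then show ?thesis
    using x(3) unfolding dag_path_def by (meson rtranclp_tranclp_tranclp)
qed

end

theorem lemma1:
  fixes f k n :: nat and V :: "'v set" and rnd src :: "'v \<Rightarrow> nat"
    and E :: "'v \<Rightarrow> 'v \<Rightarrow> bool" and DAG :: "nat \<Rightarrow> 'v set" and Correct :: "nat set"
    and leader :: "nat \<Rightarrow> nat"
    and i w :: nat and v :: 'v
  assumes "f \<ge> 1" and "k \<ge> 2"
    and setting: "dag_setting f k n V rnd src E DAG Correct"
    and leader_valid: "\<forall>w. leader w \<in> {1..n}"
    and "i \<in> Correct" and "w \<ge> 1"
    and "v \<in> DAG i" and "rnd v = wave_round w 1" and "src v = leader w"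
    and commit: "finite {u \<in> DAG i. rnd u = wave_round w 4 \<and> dag_path E u v}"
      "card {u \<in> DAG i. rnd u = wave_round w 4 \<and> dag_path E u v} \<ge> (k - 1) * f + 1"
  shows "\<forall>j \<in> {1..n}. \<forall>w' > w. \<forall>v' \<in> DAG j.
           rnd v' = wave_round w' 1 \<and> src v' = leader w' \<longrightarrow> dag_path E v' v"
proof (intro ballI allI impI)
  interpret dag_rider f k n V rnd src E DAG Correct
    using setting by (rule dag_rider.intro)
  fix j w' v'
  assume "j \<in> {1..n}" "w < w'" "v' \<in> DAG j" "rnd v' = wave_round w' 1 \<and> src v' = leader w'"
  have "DAG i \<subseteq> V"
    using correct_subset \<open>i \<in> Correct\<close> local_dag_subset by blast
  moreover have "v' \<in> V" and "wave_round w 4 < rnd v'"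
    using local_dag_subset \<open>j \<in> {1..n}\<close> \<open>v' \<in> DAG j\<close> \<open>w < w'\<close> \<open>w \<ge> 1\<close> \<open>rnd v' = _ \<and> _\<close>
    by (auto simp: wave_round_def)
  ultimately show "dag_path E v' v"
    using quorum_reached_from_later_rounds[OF \<open>k \<ge> 2\<close> _ _ commit(2)] by blast
qed

end
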